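(* Consider the Gumbel-max watermark model of the context. If, almost surely, $\mathbf{P}_t\in\mathcal{P}_{\Delta_n}$, and $n$ is large enough that $\Delta_n<0.5$, then almost surely $\mathbb{E}_{Y\sim U(0,1)}\big(\bar f_{1,t}(Y)-1\big)^2\ge c\,\Delta_n$, where $c>0$ is a universal constant.
   Context: $\mathcal{W}$ is a finite vocabulary; $\mathcal{P}_\Delta=\{\mathbf{P}:\max_wP_w\le1-\Delta\}$. For a probability vector $\mathbf{P}$, $f_{1,\mathbf{P}}(r)=\sum_{w:P_w>0}r^{1/P_w-1}$ (density of the CDF $\sum_wP_wr^{1/P_w}$ on $[0,1]$). Watermark model: at step $t$ a random next-token distribution $\mathbf{P}_t$ is produced and a pivotal statistic $Y_t$ is observed (Gumbel-max scheme: $\xi_t=(U_{t,w})_w$ i.i.d. $U(0,1)$, token $w_t$, $Y_t=U_{t,w_t}$). With $\mathcal{G}_{t-1}=\sigma(Y_1,\dots,Y_{t-1})$, define $\bar f_{1,t}(y)=\mathbb{E}_1[f_{1,\mathbf{P}_t}(y)\mid\mathcal{G}_{t-1}]$, where the conditional expectation is over $\mathbf{P}_t$ under the watermark model; in $\mathbb{E}_{Y\sim U(0,1)}$, $\bar f_{1,t}$ is held fixed and only $Y$ is integrated. *)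

theory Defs
  imports "HOL-Probability.Probability"
begin

text \<open>Vocabulary: a finite set W of token indices (coded as naturals, so that
 the constant can be quantified uniformly over all finite vocabularies).\<close>

definition prob_vec :: "nat set \<Rightarrow> (nat \<Rightarrow> real) \<Rightarrow> bool" where
  "prob_vec W P \<longleftrightarrow> (\<forall>w. 0 \<le> P w) \<and> (\<forall>w. w \<notin> W \<longrightarrow> P w = 0) \<and> sum P W = 1"

definition PDelta :: "nat set \<Rightarrow> real \<Rightarrow> (nat \<Rightarrow> real) set" where
  "PDelta W \<Delta> = {P. prob_vec W P \<and> (\<forall>w\<in>W. P w \<le> 1 - \<Delta>)}"

definition f1 :: "nat set \<Rightarrow> (nat \<Rightarrow> real) \<Rightarrow> real \<Rightarrow> real" where
  "f1 W P r = (\<Sum>w\<in>{w\<in>W. 0 < P w}. r powr (1 / P w - 1))"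

text \<open>Mixture of f_{1,P} over a (conditional) law mu of the random distribution P_t.\<close>
definition fbar :: "nat set \<Rightarrow> (nat \<Rightarrow> real) measure \<Rightarrow> real \<Rightarrow> real" where
  "fbar W \<mu> y = (\<integral>P. f1 W P y \<partial>\<mu>)"

end

theory Submission
  imports Defs
begin

text \<open>With \<open>d = \<Delta>/2\<close> and \<open>A = (1 - d, 1)\<close>, every single distribution \<open>P\<close> satisfies
  \<open>\<integral>\<^sub>A f1 P = \<Sum>\<^sub>w P\<^sub>w (1 - (1 - d) powr (1/P\<^sub>w)) \<ge> d \<Sum>\<^sub>w P\<^sub>w / (P\<^sub>w + d)\<close>, and the last sum
  is at least \<open>7/6\<close> because no token carries more than \<open>1 - 2d\<close> of the mass. By Fubini the
  mixture \<open>fbar\<close> inherits \<open>\<integral>\<^sub>A fbar \<ge> (1 + 1/6) |A|\<close>, and the tangent-line bound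
  \<open>(h - 1)\<^sup>2 \<ge> 2\<epsilon>(h - 1) - \<epsilon>\<^sup>2\<close> with \<open>\<epsilon> = 1/6\<close>, integrated over \<open>A\<close>, gives
  \<open>\<integral> (fbar - 1)\<^sup>2 \<ge> |A|/36 = \<Delta>/72\<close>.\<close>

lemma one_minus_powr_inverse_le:
  fixes p d :: real
  assumes "0 < p" "0 < d" "d < 1"
  shows "(1 - d) powr (1 / p) \<le> p / (p + d)"
proof -
  have "(1 - d) powr (1 / p) = exp (ln (1 - d) / p)"
    using assms by (simp add: powr_def)
  also have "\<dots> \<le> exp (- d / p)"
    using assms ln_le_minus_one[of "1 - d"] divide_right_mono[of "ln (1 - d)" "- d" p] by simp
  also have "\<dots> \<le> 1 / (1 + d / p)"
    using assms exp_ge_add_one_self[of "d / p"]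
    by (simp add: exp_minus inverse_eq_divide frac_le add_pos_pos)
  also have "\<dots> = p / (p + d)"
    using assms by (simp add: field_simps)
  finally show ?thesis .
qed

lemma set_integral_powr_Ioo:
  fixes a b k :: real
  assumes "0 < a" "a \<le> b" "k \<noteq> -1"
  shows "(LINT y:{a<..<b}|lborel. y powr k) = (b powr (k + 1) - a powr (k + 1)) / (k + 1)"
proof -
  have "(LBINT y=ereal a..ereal b. y powr k) = b powr (k + 1) / (k + 1) - a powr (k + 1) / (k + 1)"
  proof (rule interval_integral_FTC_finite)
    show "continuous_on {min a b..max a b} (\<lambda>y. y powr k)"
      using assms by (intro continuous_intros) auto
    fix x assume "min a b \<le> x" "x \<le> max a b"
    then have "0 < x" using assms by auto
    then have "((\<lambda>y. y powr (k + 1) / (k + 1)) has_real_derivative x powr k) (at x)"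
      using has_real_derivative_powr[of x "k + 1"] assms
      by (auto intro!: derivative_eq_intros)
    then show "((\<lambda>y. y powr (k + 1) / (k + 1)) has_vector_derivative x powr k) (at x within {min a b..max a b})"
      by (simp add: has_real_derivative_iff_has_vector_derivative[symmetric] has_field_derivative_at_within)
  qed
  moreover have "(LBINT y=ereal a..ereal b. y powr k) = (LINT y:{a<..<b}|lborel. y powr k)"
    using assms by (simp add: interval_lebesgue_integral_def einterval_def greaterThanLessThan_def
        greaterThan_def lessThan_def Collect_conj_eq)
  ultimately show ?thesis by (simp add: diff_divide_distrib)
qed

lemma sum_div_add_ge_seven_sixths:
  fixes P :: "'a \<Rightarrow> real"
  assumes W: "finite W" and nonneg: "\<And>w. w \<in> W \<Longrightarrow> 0 \<le> P w" and sum1: "sum P W = 1"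
    and le: "\<And>w. w \<in> W \<Longrightarrow> P w \<le> 1 - 2 * d" and d: "0 < d" "d < 1/4"
  shows "7/6 \<le> (\<Sum>w\<in>W. P w / (P w + d))"
proof -
  have sum_ge: "sum P S / (b + d) \<le> (\<Sum>w\<in>S. P w / (P w + d))"
    if "S \<subseteq> W" "\<And>w. w \<in> S \<Longrightarrow> P w \<le> b" for S b
    unfolding sum_divide_distrib
  proof (rule sum_mono)
    fix w assume "w \<in> S"
    then have "0 \<le> P w" "P w \<le> b" using that nonneg by auto
    then show "P w / (b + d) \<le> P w / (P w + d)"
      using d by (intro divide_left_mono) auto
  qed
  have "W \<noteq> {}" using sum1 by auto
  then obtain w0 where w0: "w0 \<in> W" "\<And>w. w \<in> W \<Longrightarrow> P w \<le> P w0"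
    using Max_in[of "P ` W"] Max_ge[of "P ` W"] W by fastforce
  show ?thesis
  proof (cases "P w0 < 1/2")
    case True
    then have "1 / (1/2 + d) \<le> (\<Sum>w\<in>W. P w / (P w + d))"
      using sum_ge[of W "1/2"] w0(2) sum1 by fastforce
    moreover have "7/6 \<le> 1 / (1/2 + d)" using d by (simp add: field_simps)
    ultimately show ?thesis by linarith
  next
    case False
    define y where "y = 1 - P w0"
    have sum_rest: "sum P (W - {w0}) = y"
      using sum.remove[OF W w0(1), of P] sum1 by (simp add: y_def)
    have "P w \<le> y" if "w \<in> W - {w0}" for w
      using member_le_sum[of w "W - {w0}" P] that nonneg W sum_rest by auto
    then have "y / (y + d) \<le> (\<Sum>w\<in>W - {w0}. P w / (P w + d))"
      using sum_ge[of "W - {w0}" y] sum_rest by auto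
    moreover have "2/3 \<le> y / (y + d)"
      using le[OF w0(1)] d by (simp add: y_def field_simps)
    moreover have "1 - 2 * d \<le> P w0 / (P w0 + d)"
    proof -
      have "d \<le> d * (2 * P w0)"
        using False d mult_left_mono[of 1 "2 * P w0" d] by auto
      then have "(1 - 2 * d) * (P w0 + d) \<le> P w0"
        using d(1) by (simp add: algebra_simps add_increasing)
      then show ?thesis using False d by (simp add: le_divide_eq)
    qed
    ultimately show ?thesis
      using sum.remove[OF W w0(1), of "\<lambda>w. P w / (P w + d)"] d by linarith
  qed
qed

lemma integral_square_deviation_ge:
  fixes h :: "'a \<Rightarrow> real"
  assumes M: "finite_measure M" and A[measurable]: "A \<in> sets M"
    and h[measurable]: "h \<in> borel_measurable M" and bounded: "AE x in M. \<bar>h x\<bar> \<le> B"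
    and \<epsilon>: "0 \<le> \<epsilon>" and mean: "(c + \<epsilon>) * measure M A \<le> (\<integral>x. indicator A x * h x \<partial>M)"
  shows "\<epsilon>\<^sup>2 * measure M A \<le> (\<integral>x. (h x - c)\<^sup>2 \<partial>M)"
proof -
  interpret finite_measure M by (fact M)
  have int_Ah: "integrable M (\<lambda>x. indicator A x * h x)"
    using bounded by (intro integrable_const_bound[where B="\<bar>B\<bar>"]) (auto split: split_indicator)
  have int_sq: "integrable M (\<lambda>x. (h x - c)\<^sup>2)"
  proof (rule integrable_const_bound[where B="(\<bar>B\<bar> + \<bar>c\<bar>)\<^sup>2"])
    show "AE x in M. norm ((h x - c)\<^sup>2) \<le> (\<bar>B\<bar> + \<bar>c\<bar>)\<^sup>2"
      using bounded by eventually_elim (auto simp: abs_le_square_iff[symmetric])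
  qed simp
  have int_A: "integrable M (\<lambda>x. indicator A x :: real)"
    by (intro integrable_const_bound[where B=1]) (auto split: split_indicator)
  have tangent: "2 * \<epsilon> * (indicator A x * h x) - (2 * \<epsilon> * c + \<epsilon>\<^sup>2) * indicator A x \<le> (h x - c)\<^sup>2"
    for x
  proof (cases "x \<in> A")
    case True
    have "0 \<le> (h x - c - \<epsilon>)\<^sup>2" by simp
    then show ?thesis using True by (simp add: power2_eq_square algebra_simps)
  qed simp
  have "\<epsilon>\<^sup>2 * measure M A \<le> 2 * \<epsilon> * (\<integral>x. indicator A x * h x \<partial>M) - (2 * \<epsilon> * c + \<epsilon>\<^sup>2) * measure M A"
    using mult_left_mono[OF mean, of "2 * \<epsilon>"] \<epsilon> by (simp add: power2_eq_square algebra_simps)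
  also have "\<dots> = (\<integral>x. 2 * \<epsilon> * (indicator A x * h x) - (2 * \<epsilon> * c + \<epsilon>\<^sup>2) * indicator A x \<partial>M)"
    using int_Ah int_A by simp
  also have "\<dots> \<le> (\<integral>x. (h x - c)\<^sup>2 \<partial>M)"
    using int_Ah int_A int_sq tangent by (intro integral_mono) auto
  finally show ?thesis .
qed

lemma integral_uniform_measure_indicator:
  fixes f :: "'a \<Rightarrow> real"
  assumes S: "emeasure M S = 1" "S \<in> sets M" and A: "A \<in> sets M" "A \<subseteq> S"
    and f: "f \<in> borel_measurable M"
  shows "(\<integral>x. indicator A x * f x \<partial>uniform_measure M S) = (LINT x:A|M. f x)"
proof -
  have "uniform_measure M S = density M (\<lambda>x. ennreal (indicator S x))"
    unfolding uniform_measure_def using S(1)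
    by (intro arg_cong[where f="density M"] ext) (simp split: split_indicator)
  then have "(\<integral>x. indicator A x * f x \<partial>uniform_measure M S) = (\<integral>x. indicator S x * (indicator A x * f x) \<partial>M)"
    using S A f by (simp add: integral_density)
  also have "\<dots> = (LINT x:A|M. f x)"
    using A(2) by (auto simp: set_lebesgue_integral_def split: split_indicator intro!: Bochner_Integration.integral_cong)
  finally show ?thesis .
qed

lemma prob_vec_finite: "prob_vec W P \<Longrightarrow> finite W"
  by (auto simp: prob_vec_def intro: ccontr)

lemma prob_vec_le_one:
  assumes "prob_vec W P"
  shows "P w \<le> 1"
proof (cases "w \<in> W")
  case True
  have "finite W" using assms(1) by (rule prob_vec_finite)
  then show ?thesis
    using True assms member_le_sum[of w W P] by (auto simp: prob_vec_def)
qed (use assms in \<open>auto simp: prob_vec_def\<close>)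

lemma f1_eq_sum_if:
  "finite W \<Longrightarrow> f1 W P y = (\<Sum>w\<in>W. if 0 < P w then y powr (1 / P w - 1) else 0)"
  unfolding f1_def by (simp add: sum.inter_filter)

lemma f1_nonneg: "0 \<le> f1 W P y"
  unfolding f1_def by (simp add: sum_nonneg)

lemma f1_le_card:
  assumes "prob_vec W P" "0 \<le> y" "y \<le> 1"
  shows "f1 W P y \<le> card W"
proof -
  have "finite W" using assms(1) by (rule prob_vec_finite)
  have "f1 W P y \<le> real (card {w\<in>W. 0 < P w}) * 1"
    unfolding f1_def using assms prob_vec_le_one[OF assms(1)]
    by (intro sum_bounded_above powr_le1) (auto simp: field_simps)
  also have "\<dots> \<le> card W"
    using \<open>finite W\<close> by (simp add: card_mono)
  finally show ?thesis .
qed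

lemma borel_measurable_f1:
  assumes "finite W"
  shows "(\<lambda>(y, P). f1 W P y) \<in> borel_measurable (borel \<Otimes>\<^sub>M Pi\<^sub>M UNIV (\<lambda>_. borel))"
  unfolding f1_eq_sum_if[OF assms] by measurable

lemma set_integral_f1_tail_ge:
  assumes P: "prob_vec W P" and d: "0 < d" "d < 1"
  shows "d * (\<Sum>w\<in>W. P w / (P w + d)) \<le> (LINT y:{1-d<..<1}|lborel. f1 W P y)"
proof -
  have "finite W" using P by (rule prob_vec_finite)
  define W' where "W' = {w\<in>W. 0 < P w}"
  have integrable: "set_integrable lborel {1-d<..<1} (\<lambda>y. y powr (1 / P w - 1))" for w
    using d
    by (intro set_integrable_subset[OF borel_integrable_atLeastAtMost'[of "1 - d" 1]])
       (auto intro!: continuous_intros)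
  have term_ge: "d * (P w / (P w + d)) \<le> (LINT y:{1-d<..<1}|lborel. y powr (1 / P w - 1))"
    if "w \<in> W'" for w
  proof -
    have p: "0 < P w" using that by (simp add: W'_def)
    have "d * (P w / (P w + d)) = P w * (1 - P w / (P w + d))"
      using p d by (simp add: field_simps)
    also have "\<dots> \<le> P w * (1 - (1 - d) powr (1 / P w))"
      using one_minus_powr_inverse_le[of "P w" d] p d by (simp add: mult_left_mono)
    also have "\<dots> = (LINT y:{1-d<..<1}|lborel. y powr (1 / P w - 1))"
      using set_integral_powr_Ioo[of "1 - d" 1 "1 / P w - 1"] p d by simp
    finally show ?thesis .
  qed
  have "d * (\<Sum>w\<in>W. P w / (P w + d)) = (\<Sum>w\<in>W'. d * (P w / (P w + d)))"
    using \<open>finite W\<close> P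
    by (auto simp: W'_def sum_distrib_left sum.inter_filter prob_vec_def intro!: sum.cong)
       (metis less_eq_real_def)
  also have "\<dots> \<le> (\<Sum>w\<in>W'. LINT y:{1-d<..<1}|lborel. y powr (1 / P w - 1))"
    by (rule sum_mono) (rule term_ge)
  also have "\<dots> = (LINT y:{1-d<..<1}|lborel. f1 W P y)"
    using integrable
    by (simp add: f1_def W'_def set_lebesgue_integral_def scaleR_sum_right set_integrable_def sum_distrib_left integral_sum)
  finally show ?thesis .
qed

lemma PDelta_set_integral_f1_tail_ge:
  assumes P: "P \<in> PDelta W (2 * d)" and d: "0 < d" "d < 1/4"
  shows "7/6 * d \<le> (LINT y:{1-d<..<1}|lborel. f1 W P y)"
proof -
  have "prob_vec W P" "\<And>w. w \<in> W \<Longrightarrow> P w \<le> 1 - 2 * d"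
    using P by (auto simp: PDelta_def)
  then have "7/6 * d \<le> d * (\<Sum>w\<in>W. P w / (P w + d))"
    using sum_div_add_ge_seven_sixths[OF prob_vec_finite _ _ _ d] d by (simp add: prob_vec_def)
  also have "\<dots> \<le> (LINT y:{1-d<..<1}|lborel. f1 W P y)"
    using set_integral_f1_tail_ge \<open>prob_vec W P\<close> d by simp
  finally show ?thesis .
qed

lemma fbar_nonneg: "0 \<le> fbar W \<mu> y"
  unfolding fbar_def by (simp add: f1_nonneg)

lemma fbar_le_card:
  assumes "prob_space \<mu>" "AE P in \<mu>. prob_vec W P" "0 \<le> y" "y \<le> 1"
  shows "fbar W \<mu> y \<le> card W"
proof (cases "integrable \<mu> (\<lambda>P. f1 W P y)")
  case True
  then show ?thesis
    unfolding fbar_def using assms f1_le_card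
    by (intro prob_space.integral_le_const) (auto elim: AE_mp)
qed (simp add: fbar_def not_integrable_integral_eq)

lemma borel_measurable_fbar:
  assumes "finite W" "sigma_finite_measure \<mu>" "sets \<mu> = sets (Pi\<^sub>M UNIV (\<lambda>_. borel))"
  shows "fbar W \<mu> \<in> borel_measurable borel"
proof -
  have "(\<lambda>(y, P). f1 W P y) \<in> borel_measurable (borel \<Otimes>\<^sub>M \<mu>)"
    using borel_measurable_f1[OF assms(1)]
    by (simp add: measurable_cong_sets[OF sets_pair_measure_cong[OF refl assms(3)] refl])
  then show ?thesis
    unfolding fbar_def[abs_def] by (rule sigma_finite_measure.borel_measurable_lebesgue_integral[OF assms(2)])
qed

lemma integral_indicator_fbar_ge:
  assumes W: "finite W"
    and \<mu>: "prob_space \<mu>" "sets \<mu> = sets (Pi\<^sub>M UNIV (\<lambda>_. borel))" "AE P in \<mu>. prob_vec W P"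
    and N: "prob_space N" "sets N = sets borel" "AE y in N. 0 \<le> y \<and> y \<le> 1"
    and A: "A \<in> sets borel"
    and ge: "AE P in \<mu>. c \<le> (\<integral>y. indicator A y * f1 W P y \<partial>N)"
  shows "c \<le> (\<integral>y. indicator A y * fbar W \<mu> y \<partial>N)"
proof -
  interpret \<mu>N: pair_prob_space \<mu> N
    using N(1) \<mu>(1) by (simp add: pair_prob_space_def pair_sigma_finite_def prob_space_imp_sigma_finite)
  have sets_\<mu>N: "sets (\<mu> \<Otimes>\<^sub>M N) = sets (Pi\<^sub>M UNIV (\<lambda>_. borel) \<Otimes>\<^sub>M borel)"
    by (rule sets_pair_measure_cong) (simp_all add: N(2) \<mu>(2))
  have [measurable]: "(\<lambda>(P, y). f1 W P y) \<in> borel_measurable (\<mu> \<Otimes>\<^sub>M N)"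
    using measurable_pair_swap[OF borel_measurable_f1[OF W]]
    by (simp add: measurable_cong_sets[OF sets_\<mu>N refl] case_prod_beta)
  have [measurable]: "A \<in> sets N" using A N(2) by simp
  have "AE z in \<mu> \<Otimes>\<^sub>M N. norm (indicator A (snd z) * f1 W (fst z) (snd z)) \<le> real (card W)"
  proof (rule \<mu>N.AE_pair_measure)
    show "{z \<in> space (\<mu> \<Otimes>\<^sub>M N). norm (indicator A (snd z) * f1 W (fst z) (snd z)) \<le> real (card W)}
        \<in> sets (\<mu> \<Otimes>\<^sub>M N)"
      by measurable
    show "AE P in \<mu>. AE y in N. norm (indicator A (snd (P, y)) * f1 W (fst (P, y)) (snd (P, y))) \<le> real (card W)"
      using \<mu>(3)
    proof eventually_elim
      case (elim P)
      from N(3) show ?case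
        by eventually_elim (use elim in \<open>auto simp: f1_nonneg f1_le_card split: split_indicator\<close>)
    qed
  qed
  then have integrable: "integrable (\<mu> \<Otimes>\<^sub>M N) (\<lambda>(P, y). indicator A y * f1 W P y)"
    by (intro \<mu>N.P.integrable_const_bound[where B="real (card W)"]) (auto simp: case_prod_beta)
  have "c \<le> (\<integral>P. (\<integral>y. indicator A y * f1 W P y \<partial>N) \<partial>\<mu>)"
    using \<mu>N.integrable_fst'[OF integrable] ge by (intro \<mu>N.M1.integral_ge_const) auto
  also have "\<dots> = (\<integral>y. (\<integral>P. indicator A y * f1 W P y \<partial>\<mu>) \<partial>N)"
    using integrable by (rule \<mu>N.Fubini_integral[symmetric])
  finally show ?thesis by (simp add: fbar_def)
qed

lemma integral_fbar_deviation_ge: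
  assumes W: "finite W" and \<mu>: "prob_space \<mu>" "sets \<mu> = sets (Pi\<^sub>M UNIV (\<lambda>_. borel))"
    and PDelta: "AE P in \<mu>. P \<in> PDelta W \<Delta>" and \<Delta>: "0 < \<Delta>" "\<Delta> < 1/2"
  shows "\<Delta> / 72 \<le> (\<integral>y. (fbar W \<mu> y - 1)\<^sup>2 \<partial>uniform_measure lborel {0<..<1::real})"
proof -
  define N where "N = uniform_measure lborel {0<..<1::real}"
  define d where "d = \<Delta> / 2"
  define A where "A = {1 - d<..<1::real}"
  have d: "0 < d" "d < 1/4" using \<Delta> by (simp_all add: d_def)
  have N: "prob_space N" "sets N = sets borel" "AE y in N. 0 \<le> y \<and> y \<le> 1"
    unfolding N_def by (auto intro: prob_space_uniform_measure AE_uniform_measureI)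
  have measure_A: "measure N A = d"
    using d by (simp add: N_def A_def)
  have prob_vec: "AE P in \<mu>. prob_vec W P"
    using PDelta by (auto simp: PDelta_def elim: AE_mp)
  have tail: "AE P in \<mu>. 7/6 * d \<le> (\<integral>y. indicator A y * f1 W P y \<partial>N)"
    using PDelta
  proof eventually_elim
    case (elim P)
    have "(\<integral>y. indicator A y * f1 W P y \<partial>N) = (LINT y:A|lborel. f1 W P y)"
      unfolding N_def A_def using d
      by (intro integral_uniform_measure_indicator) (auto simp: f1_eq_sum_if[OF W])
    then show ?case
      using PDelta_set_integral_f1_tail_ge[of P W d] elim d by (simp add: A_def d_def)
  qed
  have "(1 + 1/6) * measure N A \<le> (\<integral>y. indicator A y * fbar W \<mu> y \<partial>N)"
    using integral_indicator_fbar_ge[OF W \<mu> prob_vec N _ tail] measure_A by (simp add: A_def)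
  then have "(1/6)\<^sup>2 * measure N A \<le> (\<integral>y. (fbar W \<mu> y - 1)\<^sup>2 \<partial>N)"
    using N(3) by (intro integral_square_deviation_ge[where B="real (card W)"])
      (auto simp: N(2) A_def N(1)[unfolded prob_space_def] measurable_cong_sets[OF N(2) refl]
        borel_measurable_fbar[OF W prob_space_imp_sigma_finite[OF \<mu>(1)] \<mu>(2)]
        fbar_nonneg fbar_le_card[OF \<mu>(1) prob_vec] elim: AE_mp)
  then show ?thesis using measure_A by (simp add: N_def d_def power2_eq_square)
qed

theorem lemmaA5:
  shows "\<exists>c>0. \<forall>(W::nat set) (\<mu>::(nat \<Rightarrow> real) measure) (\<Delta>::real).
     finite W \<longrightarrow> prob_space \<mu> \<longrightarrow> sets \<mu> = sets (Pi\<^sub>M UNIV (\<lambda>_. borel)) \<longrightarrow>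
     (AE P in \<mu>. P \<in> PDelta W \<Delta>) \<longrightarrow> \<Delta> < 1/2 \<longrightarrow>
     (\<integral>y. (fbar W \<mu> y - 1)\<^sup>2 \<partial>(uniform_measure lborel {0<..<1::real})) \<ge> c * \<Delta>"
proof (intro exI[of _ "1/72"] conjI allI impI)
  fix W :: "nat set" and \<mu> :: "(nat \<Rightarrow> real) measure" and \<Delta> :: real
  assume W: "finite W" and \<mu>: "prob_space \<mu>" "sets \<mu> = sets (Pi\<^sub>M UNIV (\<lambda>_. borel))"
    and PDelta: "AE P in \<mu>. P \<in> PDelta W \<Delta>" and \<Delta>: "\<Delta> < 1/2"
  show "1/72 * \<Delta> \<le> (\<integral>y. (fbar W \<mu> y - 1)\<^sup>2 \<partial>uniform_measure lborel {0<..<1::real})"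
  proof (cases "0 < \<Delta>")
    case True
    then show ?thesis using integral_fbar_deviation_ge[OF W \<mu> PDelta True \<Delta>] by simp
  next
    case False
    moreover have "0 \<le> (\<integral>y. (fbar W \<mu> y - 1)\<^sup>2 \<partial>uniform_measure lborel {0<..<1::real})"
      by (simp add: integral_nonneg)
    ultimately show ?thesis by linarith
  qed
qed simp

end
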